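(* Let $G$ be any graph and $s\geqslant 1$ an integer. Let $G^+=\pi(G_1,G_2)$, where $G_1,G_2$ are two disjoint copies of $G$. Then $G^+$ is $\mathbf{E_s}$ if and only if $G$ is $\mathbf{E_{s-1}}$.
   Context: All graphs are finite and simple. For two disjoint graphs $G$ and $H$, $\pi(G,H)$ is the graph obtained from the disjoint union of $G$ and $H$ by adding new vertices $\Pi_G=\{\pi_u: u\in V(G)\}$ and $\Pi_H=\{\pi_u:u\in V(H)\}$, making $(\Pi_G,\Pi_H)$ a complete bipartite graph (every vertex of $\Pi_G$ adjacent to every vertex of $\Pi_H$, no edges inside $\Pi_G$ or inside $\Pi_H$), and adding the edge $u\pi_u$ for each $u\in V(G)\cup V(H)$. For a positive integer $t$, a graph is $t$-extendable if every independent set of size exactly $t$ is contained in a maximum independent set. For $s\geqslant1$, a graph is $\mathbf{E_s}$ if it is $t$-extendable for every $t\in[s]$; by convention every graph is $\mathbf{E_0}$. *)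

theory Defs
  imports Main
begin

definition simple_graph :: "'a set \<Rightarrow> ('a \<Rightarrow> 'a \<Rightarrow> bool) \<Rightarrow> bool" where
  "simple_graph V E \<longleftrightarrow> finite V \<and> (\<forall>u v. E u v \<longrightarrow> E v u)
     \<and> (\<forall>v. \<not> E v v) \<and> (\<forall>u v. E u v \<longrightarrow> u \<in> V \<and> v \<in> V)"

definition indep_set :: "'a set \<Rightarrow> ('a \<Rightarrow> 'a \<Rightarrow> bool) \<Rightarrow> 'a set \<Rightarrow> bool" where
  "indep_set V E S \<longleftrightarrow> S \<subseteq> V \<and> (\<forall>u\<in>S. \<forall>v\<in>S. \<not> E u v)"

definition max_indep_set :: "'a set \<Rightarrow> ('a \<Rightarrow> 'a \<Rightarrow> bool) \<Rightarrow> 'a set \<Rightarrow> bool" where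
  "max_indep_set V E S \<longleftrightarrow> indep_set V E S \<and> (\<forall>T. indep_set V E T \<longrightarrow> card T \<le> card S)"

definition t_extendable :: "'a set \<Rightarrow> ('a \<Rightarrow> 'a \<Rightarrow> bool) \<Rightarrow> nat \<Rightarrow> bool" where
  "t_extendable V E t \<longleftrightarrow>
     (\<forall>S. indep_set V E S \<and> card S = t \<longrightarrow> (\<exists>M. max_indep_set V E M \<and> S \<subseteq> M))"

definition E_s :: "'a set \<Rightarrow> ('a \<Rightarrow> 'a \<Rightarrow> bool) \<Rightarrow> nat \<Rightarrow> bool" where
  "E_s V E s \<longleftrightarrow> (\<forall>t\<in>{1..s}. t_extendable V E t)"

text \<open>Vertices of pi(G1,G2) for two disjoint copies G1, G2 of G:
  L u (copy of u in G1), R u (copy in G2), PL u (pi vertex of L u), PR u (pi vertex of R u).\<close>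
datatype 'a pv = L 'a | R 'a | PL 'a | PR 'a

definition pi_V :: "'a set \<Rightarrow> 'a pv set" where
  "pi_V V = L ` V \<union> R ` V \<union> PL ` V \<union> PR ` V"

fun pi_E :: "('a \<Rightarrow> 'a \<Rightarrow> bool) \<Rightarrow> 'a pv \<Rightarrow> 'a pv \<Rightarrow> bool" where
  "pi_E E (L u) (L v) = E u v"
| "pi_E E (R u) (R v) = E u v"
| "pi_E E (L u) (PL v) = (u = v)"
| "pi_E E (PL u) (L v) = (u = v)"
| "pi_E E (R u) (PR v) = (u = v)"
| "pi_E E (PR u) (R v) = (u = v)"
| "pi_E E (PL u) (PR v) = True"
| "pi_E E (PR u) (PL v) = True"
| "pi_E E _ _ = False"

end

theory Submission
  imports Defs
begin

text \<open>An independent set of \<open>\<pi>(G,G)\<close> cannot meet both \<open>\<Pi>\<close>-sides, so after exchanging the two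
  copies if necessary it avoids \<open>\<Pi>\<^sub>2\<close>. It then holds at most one of \<open>u, \<pi>\<^sub>u\<close> for every vertex
  \<open>u\<close> of the first copy, together with an independent set of the second copy. Hence
  \<open>\<alpha>(\<pi>(G,G)) = |V| + \<alpha>(G)\<close>, attained by \<open>A \<union> \<pi>(V - A) \<union> B\<close> with \<open>A\<close> independent in the first
  copy and \<open>B\<close> maximum in the second, and a set avoiding \<open>\<Pi>\<^sub>2\<close> extends to a maximum one as soon
  as its part in the second copy does. A set of size \<open>t \<le> s\<close> can be oriented so that this part
  has fewer than \<open>t\<close> vertices, which is where \<open>E\<^sub>s\<^sub>-\<^sub>1\<close> enters. Conversely, for \<open>S\<close> independent
  in \<open>G\<close> and \<open>v \<in> S\<close>, every maximum extension of \<open>S\<close> placed in the second copy plus \<open>\<pi>\<^sub>v\<close> avoids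
  \<open>\<Pi>\<^sub>2\<close>, so by the count its part in the second copy is a maximum independent set of \<open>G\<close>.\<close>

lemma max_indep_set_exists:
  assumes "simple_graph V E"
  shows "\<exists>M. max_indep_set V E M"
proof -
  have "\<forall>T. indep_set V E T \<longrightarrow> card T < Suc (card V)"
    using assms by (auto simp: indep_set_def simple_graph_def intro: card_mono le_imp_less_Suc)
  then show ?thesis
    using Lattices_Big.ex_has_greatest_nat[of "indep_set V E" "{}" card]
    unfolding max_indep_set_def by (auto simp: indep_set_def)
qed

lemma extends_to_max_indep_set_if_E_s:
  assumes "simple_graph V E" "E_s V E k" "indep_set V E S" "card S \<le> k"
  shows "\<exists>M. max_indep_set V E M \<and> S \<subseteq> M"
proof (cases "S = {}")
  case True
  then show ?thesis using max_indep_set_exists[OF assms(1)] by auto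
next
  case False
  have "finite S"
    using assms(1,3) by (auto simp: indep_set_def simple_graph_def intro: finite_subset)
  with False have "card S \<in> {1..k}"
    using assms(4) by (simp add: Suc_le_eq card_gt_0_iff)
  then show ?thesis
    using assms(2,3) unfolding E_s_def t_extendable_def by blast
qed

fun pv_base :: "'a pv \<Rightarrow> 'a" where
  "pv_base (L u) = u" | "pv_base (R u) = u" | "pv_base (PL u) = u" | "pv_base (PR u) = u"

fun pv_mirror :: "'a pv \<Rightarrow> 'a pv" where
  "pv_mirror (L u) = R u" | "pv_mirror (R u) = L u"
| "pv_mirror (PL u) = PR u" | "pv_mirror (PR u) = PL u"

lemma pv_mirror_mirror [simp]: "pv_mirror (pv_mirror x) = x"
  by (cases x) auto

lemma pv_mirror_image_iff [simp]: "x \<in> pv_mirror ` S \<longleftrightarrow> pv_mirror x \<in> S"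
  by (metis image_iff pv_mirror_mirror)

lemma pv_mirror_image_image [simp]: "pv_mirror ` pv_mirror ` S = S"
  by (simp add: image_image)

lemma card_pv_mirror_image [simp]: "card (pv_mirror ` S) = card S"
  by (rule card_image) (metis inj_onI pv_mirror_mirror)

lemma pi_E_mirror [simp]: "pi_E E (pv_mirror x) (pv_mirror y) = pi_E E x y"
  by (cases x; cases y) auto

lemma mem_pi_V_iff: "x \<in> pi_V V \<longleftrightarrow> pv_base x \<in> V"
  by (cases x) (auto simp: pi_V_def)

lemma indep_set_pi_mirror_iff [simp]:
  "indep_set (pi_V V) (pi_E E) (pv_mirror ` S) \<longleftrightarrow> indep_set (pi_V V) (pi_E E) S"
proof -
  have "pv_base (pv_mirror x) = pv_base x" for x :: "'a pv"
    by (cases x) auto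
  then show ?thesis
    by (auto simp: indep_set_def mem_pi_V_iff)
qed

lemma max_indep_set_pi_mirror:
  "max_indep_set (pi_V V) (pi_E E) M \<Longrightarrow> max_indep_set (pi_V V) (pi_E E) (pv_mirror ` M)"
  unfolding max_indep_set_def by (metis card_pv_mirror_image indep_set_pi_mirror_iff)

lemma finite_indep_set_pi:
  "simple_graph V E \<Longrightarrow> indep_set (pi_V V) (pi_E E) S \<Longrightarrow> finite S"
  by (auto simp: simple_graph_def indep_set_def pi_V_def intro: finite_subset)

lemma indep_set_pi_not_PL_PR:
  "indep_set (pi_V V) (pi_E E) S \<Longrightarrow> PL u \<in> S \<Longrightarrow> PR v \<notin> S"
  by (force simp: indep_set_def)

lemma indep_set_pi_not_L_PL:
  "indep_set (pi_V V) (pi_E E) S \<Longrightarrow> L u \<in> S \<Longrightarrow> PL u \<notin> S"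
  by (force simp: indep_set_def)

lemma indep_set_pi_R_part:
  "indep_set (pi_V V) (pi_E E) S \<Longrightarrow> indep_set V E {u. R u \<in> S}"
  by (force simp: indep_set_def mem_pi_V_iff)

lemma indep_set_pi_L_part:
  "indep_set (pi_V V) (pi_E E) S \<Longrightarrow> indep_set V E {u. L u \<in> S}"
  by (force simp: indep_set_def mem_pi_V_iff)

lemma card_indep_set_pi_le_if_no_PR:
  assumes sg: "simple_graph V E" and ind: "indep_set (pi_V V) (pi_E E) T"
    and no_PR: "\<forall>u. PR u \<notin> T"
  shows "card T \<le> card V + card {u. R u \<in> T}"
proof -
  let ?B = "{u. R u \<in> T}"
  have "inj_on pv_base (T - range R)"
  proof (rule inj_onI)
    fix x y assume "x \<in> T - range R" "y \<in> T - range R" "pv_base x = pv_base y"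
    then show "x = y"
      using no_PR indep_set_pi_not_L_PL[OF ind] by (cases x; cases y) fastforce+
  qed
  moreover have "pv_base ` (T - range R) \<subseteq> V"
    using ind by (auto simp: indep_set_def mem_pi_V_iff)
  ultimately have "card (T - range R) \<le> card V"
    using sg by (auto simp: simple_graph_def intro: card_inj_on_le)
  moreover have "card T = card ((T - range R) \<union> R ` ?B)"
    by (rule arg_cong[where f = card]) auto
  moreover have "card (R ` ?B) = card ?B"
    by (simp add: card_image inj_on_def)
  ultimately show ?thesis
    using card_Un_le[of "T - range R" "R ` ?B"] by linarith
qed

lemma card_indep_set_pi_le:
  assumes sg: "simple_graph V E" and max: "max_indep_set V E B"
    and ind: "indep_set (pi_V V) (pi_E E) T"
  shows "card T \<le> card V + card B"
proof -
  obtain T' where T': "T' = T \<or> T' = pv_mirror ` T" "\<forall>u. PR u \<notin> T'"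
  proof (cases "\<exists>u. PR u \<in> T")
    case True
    then have "\<forall>u. PR u \<notin> pv_mirror ` T"
      using indep_set_pi_not_PL_PR[OF ind] by auto
    then show ?thesis using that by blast
  qed (use that in blast)
  have ind': "indep_set (pi_V V) (pi_E E) T'"
    using T'(1) ind by auto
  have "card {u. R u \<in> T'} \<le> card B"
    using indep_set_pi_R_part[OF ind'] max by (simp add: max_indep_set_def)
  then show ?thesis
    using card_indep_set_pi_le_if_no_PR[OF sg ind' T'(2)] T'(1) by auto
qed

definition pi_canonical :: "'a set \<Rightarrow> 'a set \<Rightarrow> 'a set \<Rightarrow> 'a pv set" where
  "pi_canonical V A B = L ` A \<union> PL ` (V - A) \<union> R ` B"

lemma indep_set_pi_canonical:
  "indep_set V E A \<Longrightarrow> indep_set V E B \<Longrightarrow> indep_set (pi_V V) (pi_E E) (pi_canonical V A B)"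
  by (auto simp: indep_set_def pi_canonical_def mem_pi_V_iff)

lemma card_pi_canonical:
  assumes "finite V" "A \<subseteq> V" "B \<subseteq> V"
  shows "card (pi_canonical V A B) = card V + card B"
proof -
  have "finite A" "finite B"
    using assms finite_subset by auto
  then have "card (L ` A \<union> PL ` (V - A)) = card A + card (V - A)"
    by (subst card_Un_disjoint) (auto simp: card_image inj_on_def assms)
  also have "\<dots> = card V"
    using assms \<open>finite A\<close> card_mono[of V A] by (simp add: card_Diff_subset)
  finally show ?thesis
    unfolding pi_canonical_def using \<open>finite A\<close> \<open>finite B\<close>
    by (subst card_Un_disjoint) (auto simp: card_image inj_on_def assms)
qed

lemma max_indep_set_pi_iff:
  assumes sg: "simple_graph V E" and max: "max_indep_set V E B"
  shows "max_indep_set (pi_V V) (pi_E E) M \<longleftrightarrow>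
    indep_set (pi_V V) (pi_E E) M \<and> card M = card V + card B"
proof
  assume M: "max_indep_set (pi_V V) (pi_E E) M"
  have "indep_set V E B" "B \<subseteq> V" "finite V"
    using max sg by (auto simp: max_indep_set_def indep_set_def simple_graph_def)
  moreover have "indep_set V E {}"
    by (simp add: indep_set_def)
  ultimately have "indep_set (pi_V V) (pi_E E) (pi_canonical V {} B)"
    and "card (pi_canonical V {} B) = card V + card B"
    using indep_set_pi_canonical card_pi_canonical[of V "{}" B] by auto
  then have "card V + card B \<le> card M"
    using M unfolding max_indep_set_def by metis
  moreover have "card M \<le> card V + card B"
    using M card_indep_set_pi_le[OF sg max] by (simp add: max_indep_set_def)
  ultimately show "indep_set (pi_V V) (pi_E E) M \<and> card M = card V + card B"
    using M by (simp add: max_indep_set_def)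
next
  assume "indep_set (pi_V V) (pi_E E) M \<and> card M = card V + card B"
  then show "max_indep_set (pi_V V) (pi_E E) M"
    using card_indep_set_pi_le[OF sg max] by (simp add: max_indep_set_def)
qed

lemma indep_set_pi_extends_if_no_PR:
  assumes sg: "simple_graph V E" and ind: "indep_set (pi_V V) (pi_E E) S"
    and no_PR: "\<forall>u. PR u \<notin> S"
    and max: "max_indep_set V E B" and R_part: "{u. R u \<in> S} \<subseteq> B"
  shows "\<exists>M. max_indep_set (pi_V V) (pi_E E) M \<and> S \<subseteq> M"
proof (intro exI conjI)
  let ?A = "{u. L u \<in> S}"
  have "indep_set V E B" "B \<subseteq> V" "finite V"
    using max sg by (auto simp: max_indep_set_def indep_set_def simple_graph_def)
  moreover have "indep_set V E ?A"
    using indep_set_pi_L_part[OF ind] .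
  moreover have "?A \<subseteq> V"
    using \<open>indep_set V E ?A\<close> by (simp add: indep_set_def)
  ultimately show "max_indep_set (pi_V V) (pi_E E) (pi_canonical V ?A B)"
    by (simp add: max_indep_set_pi_iff[OF sg max] indep_set_pi_canonical card_pi_canonical)
  show "S \<subseteq> pi_canonical V ?A B"
  proof
    fix x assume x: "x \<in> S"
    have "x \<in> pi_V V"
      using x ind by (auto simp: indep_set_def)
    then show "x \<in> pi_canonical V ?A B"
      using x no_PR R_part indep_set_pi_not_L_PL[OF ind]
      by (cases x) (auto simp: pi_canonical_def mem_pi_V_iff)
  qed
qed

lemma indep_set_pi_mirror_to_no_PR:
  assumes sg: "simple_graph V E" and ind: "indep_set (pi_V V) (pi_E E) S" and "S \<noteq> {}"
  obtains S' where "S' = S \<or> S' = pv_mirror ` S" "\<forall>u. PR u \<notin> S'"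
    "card {u. R u \<in> S'} < card S"
proof -
  have fin: "finite S"
    using finite_indep_set_pi[OF sg ind] .
  show ?thesis
  proof (cases "\<exists>v. PR v \<in> S")
    case True
    then obtain v where v: "PR v \<in> S" by blast
    have "\<forall>u. PR u \<notin> pv_mirror ` S"
      using indep_set_pi_not_PL_PR[OF ind] v by auto
    moreover have "L ` {u. L u \<in> S} \<subset> S"
      using v by auto
    then have "card (L ` {u. L u \<in> S}) < card S"
      using fin by (simp add: psubset_card_mono)
    then have "card {u. L u \<in> S} < card S"
      by (simp add: card_image inj_on_def)
    ultimately show ?thesis
      using that[of "pv_mirror ` S"] by simp
  next
    case no_PR: False
    let ?B = "{u. R u \<in> S}"
    show ?thesis
    proof (cases "card ?B < card S")
      case True
      with no_PR show ?thesis using that by blast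
    next
      case False
      have "R ` ?B \<subseteq> S" "card (R ` ?B) = card ?B"
        by (auto simp: card_image inj_on_def)
      then have "R ` ?B = S"
        using False fin by (metis card_subset_eq card_mono le_antisym not_less)
      then have "\<forall>u. PR u \<notin> pv_mirror ` S" "{u. R u \<in> pv_mirror ` S} = {}"
        by auto
      moreover have "0 < card S"
        using fin \<open>S \<noteq> {}\<close> by (simp add: card_gt_0_iff)
      ultimately show ?thesis
        using that by (metis card.empty)
    qed
  qed
qed

lemma E_s_pi_if_E_s:
  assumes sg: "simple_graph V E" and E_s_G: "E_s V E (s - 1)"
  shows "E_s (pi_V V) (pi_E E) s"
  unfolding E_s_def t_extendable_def
proof (intro ballI allI impI, elim conjE)
  fix t S assume t: "t \<in> {1..s}" and ind: "indep_set (pi_V V) (pi_E E) S" and "card S = t"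
  then have "S \<noteq> {}"
    by auto
  then obtain S' where S': "S' = S \<or> S' = pv_mirror ` S" "\<forall>u. PR u \<notin> S'"
    "card {u. R u \<in> S'} < t"
    using indep_set_pi_mirror_to_no_PR[OF sg ind] \<open>card S = t\<close> by metis
  have ind': "indep_set (pi_V V) (pi_E E) S'"
    using S'(1) ind by auto
  obtain B where "max_indep_set V E B" "{u. R u \<in> S'} \<subseteq> B"
    using extends_to_max_indep_set_if_E_s[OF sg E_s_G indep_set_pi_R_part[OF ind']] S'(3) t by fastforce
  then obtain M where M: "max_indep_set (pi_V V) (pi_E E) M" "S' \<subseteq> M"
    using indep_set_pi_extends_if_no_PR[OF sg ind' S'(2)] by blast
  show "\<exists>M. max_indep_set (pi_V V) (pi_E E) M \<and> S \<subseteq> M"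
    using S'(1)
  proof
    assume "S' = pv_mirror ` S"
    then have "S \<subseteq> pv_mirror ` M"
      using M(2) by auto
    then show ?thesis
      using max_indep_set_pi_mirror[OF M(1)] by blast
  qed (use M in blast)
qed

lemma E_s_if_E_s_pi:
  assumes sg: "simple_graph V E" and E_s_pi: "E_s (pi_V V) (pi_E E) s"
  shows "E_s V E (s - 1)"
  unfolding E_s_def t_extendable_def
proof (intro ballI allI impI, elim conjE)
  fix t S assume t: "t \<in> {1..s - 1}" and ind: "indep_set V E S" and card_S: "card S = t"
  then have fin: "finite S" and "S \<noteq> {}"
    by (auto intro: card_ge_0_finite)
  then obtain v where v: "v \<in> S"
    by blast
  let ?S' = "insert (PL v) (R ` S)"
  have "indep_set (pi_V V) (pi_E E) ?S'"
    using ind v by (auto simp: indep_set_def mem_pi_V_iff)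
  moreover have "card ?S' = t + 1"
    using fin card_S by (subst card_insert_disjoint) (auto simp: card_image inj_on_def)
  moreover have "t + 1 \<in> {1..s}"
    using t by auto
  ultimately obtain M where M: "max_indep_set (pi_V V) (pi_E E) M" "?S' \<subseteq> M"
    using E_s_pi unfolding E_s_def t_extendable_def by blast
  have ind_M: "indep_set (pi_V V) (pi_E E) M"
    using M(1) by (simp add: max_indep_set_def)
  have "\<forall>u. PR u \<notin> M"
    using indep_set_pi_not_PL_PR[OF ind_M] M(2) by blast
  obtain B where B: "max_indep_set V E B"
    using max_indep_set_exists[OF sg] by blast
  have "card V + card B = card M"
    using M(1) max_indep_set_pi_iff[OF sg B] by simp
  also have "\<dots> \<le> card V + card {u. R u \<in> M}"
    using card_indep_set_pi_le_if_no_PR[OF sg ind_M \<open>\<forall>u. PR u \<notin> M\<close>] .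
  finally have "max_indep_set V E {u. R u \<in> M}"
    using B indep_set_pi_R_part[OF ind_M] unfolding max_indep_set_def by fastforce
  moreover have "S \<subseteq> {u. R u \<in> M}"
    using M(2) by auto
  ultimately show "\<exists>M. max_indep_set V E M \<and> S \<subseteq> M"
    by blast
qed

theorem lemma3:
  fixes V :: "'a set" and E :: "'a \<Rightarrow> 'a \<Rightarrow> bool" and s :: nat
  assumes "simple_graph V E" and "s \<ge> 1"
  shows "E_s (pi_V V) (pi_E E) s \<longleftrightarrow> E_s V E (s - 1)"
  using E_s_if_E_s_pi[OF assms(1)] E_s_pi_if_E_s[OF assms(1)] by blast

end
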